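(* The functor $\mathrm{Max}$ from the category of unital C*-algebras (with unital *-homomorphisms) to the category of unital involutive quantales (with unital involutive homomorphisms) is faithful: if $f,g:A\to B$ are unital *-homomorphisms with $\mathrm{Max}\,f=\mathrm{Max}\,g$, then $f=g$.
   Context: A quantale is a complete lattice with an associative multiplication distributing over arbitrary joins in both variables; unital involutive quantales and their homomorphisms preserve joins, multiplication, unit and involution. For a unital C*-algebra $A$, $\mathrm{Max}\,A$ is the quantale of all closed linear subspaces of $A$ with join $\bigvee_i M_i=\overline{\sum_i M_i}$, product $M\cdot N=$ closure of the linear span of $\{ab:a\in M,b\in N\}$, involution $M^*=\{a^*:a\in M\}$, and unit the subspace spanned by the identity. For a unital *-homomorphism $f:A\to B$, $\mathrm{Max}\,f:\mathrm{Max}\,A\to\mathrm{Max}\,B$ is $M\mapsto\overline{f[M]}$. *)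

theory Defs
  imports "HOL-Analysis.Analysis"
begin

text \<open>Unital C*-algebras as a type class: a complete normed real algebra with a unit
(the zero algebra is allowed: no axiom 1 \<noteq> 0), equipped with a complex scalar
multiplication extending the real one and an involution satisfying the C*-identity.\<close>

class unital_cstar_algebra = real_normed_algebra + banach + monoid_mult +
  fixes scaleC :: "complex \<Rightarrow> 'a \<Rightarrow> 'a" (infixr "*\<^sub>C" 75)
    and cstar :: "'a \<Rightarrow> 'a"
  assumes scaleC_of_real: "scaleC (complex_of_real r) x = scaleR r x"
    and scaleC_add_right: "scaleC c (x + y) = scaleC c x + scaleC c y"
    and scaleC_add_left: "scaleC (c + d) x = scaleC c x + scaleC d x"
    and scaleC_scaleC: "scaleC c (scaleC d x) = scaleC (c * d) x"
    and scaleC_one: "scaleC 1 x = x"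
    and norm_scaleC: "norm (scaleC c x) = cmod c * norm x"
    and mult_scaleC_left: "scaleC c x * y = scaleC c (x * y)"
    and mult_scaleC_right: "x * scaleC c y = scaleC c (x * y)"
    and cstar_cstar: "cstar (cstar x) = x"
    and cstar_add: "cstar (x + y) = cstar x + cstar y"
    and cstar_scaleC: "cstar (scaleC c x) = scaleC (cnj c) (cstar x)"
    and cstar_mult: "cstar (x * y) = cstar y * cstar x"
    and cstar_identity: "norm (cstar x * x) = (norm x)\<^sup>2"

definition closed_csubspace :: "'a::unital_cstar_algebra set \<Rightarrow> bool" where
  "closed_csubspace M \<longleftrightarrow> 0 \<in> M \<and> (\<forall>x\<in>M. \<forall>y\<in>M. x + y \<in> M)
     \<and> (\<forall>c. \<forall>x\<in>M. scaleC c x \<in> M) \<and> closed M"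

definition Max_carrier :: "'a::unital_cstar_algebra set set" where
  "Max_carrier = {M. closed_csubspace M}"

definition unital_star_hom :: "('a::unital_cstar_algebra \<Rightarrow> 'b::unital_cstar_algebra) \<Rightarrow> bool" where
  "unital_star_hom f \<longleftrightarrow> (\<forall>x y. f (x + y) = f x + f y)
     \<and> (\<forall>c x. f (scaleC c x) = scaleC c (f x))
     \<and> (\<forall>x y. f (x * y) = f x * f y)
     \<and> f 1 = 1
     \<and> (\<forall>x. f (cstar x) = cstar (f x))"

definition Max_map :: "('a::unital_cstar_algebra \<Rightarrow> 'b::unital_cstar_algebra) \<Rightarrow> 'a set \<Rightarrow> 'b set" where
  "Max_map f M = closure (f ` M)"

end

theory Submission
  imports Defs
begin

text \<open>Max f sends the complex line through a to the line through f a (lines are closed,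
so the closure changes nothing). Hence Max f = Max g makes g a a multiple of f a for every a.
Together with f 1 = g 1 = 1 this forces f = g: if f a is not a multiple of 1, comparing the
multipliers at a and at a + 1 shows both equal 1; if f a = l 1, then a - l 1 lies in the
kernel of f, hence in that of g, so g a = l 1 too.\<close>

interpretation scaleC: vector_space "scaleC :: complex \<Rightarrow> 'a \<Rightarrow> 'a::unital_cstar_algebra"
  by unfold_locales (simp_all add: scaleC_add_right scaleC_add_left scaleC_scaleC scaleC_one)

abbreviation clinear :: "('a::unital_cstar_algebra \<Rightarrow> 'b::unital_cstar_algebra) \<Rightarrow> bool" where
  "clinear \<equiv> Vector_Spaces.linear (*\<^sub>C) (*\<^sub>C)"

lemma unital_star_hom_clinear: "unital_star_hom f \<Longrightarrow> clinear f"
  unfolding unital_star_hom_def by (simp add: Vector_Spaces.linear_iff scaleC.vector_space_axioms)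

lemma closed_csubspace_iff: "closed_csubspace M \<longleftrightarrow> scaleC.subspace M \<and> closed M"
  unfolding closed_csubspace_def scaleC.subspace_def by blast

lemma closed_span_singleton: "closed (scaleC.span {x :: 'a::unital_cstar_algebra})"
proof (cases "x = 0")
  case True
  then show ?thesis by simp
next
  case False
  have "bounded_linear (\<lambda>c::complex. c *\<^sub>C x)"
  proof (rule bounded_linear_intro[where K="norm x"])
    show "(r *\<^sub>R c) *\<^sub>C x = r *\<^sub>R (c *\<^sub>C x)" for r c
      by (metis scaleC_of_real scaleC_scaleC scaleR_conv_of_real)
  qed (simp_all add: scaleC_add_left norm_scaleC)
  then have "complete (range (\<lambda>c::complex. c *\<^sub>C x))"
    using False by (intro complete_isometric_image[where e="norm x"]) (auto simp: norm_scaleC complete_UNIV)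
  then show ?thesis
    unfolding scaleC.span_singleton by (rule complete_imp_closed)
qed

lemma span_singleton_in_Max_carrier: "scaleC.span {x} \<in> Max_carrier"
  by (simp add: Max_carrier_def closed_csubspace_iff closed_span_singleton)

lemma Max_map_span_singleton:
  assumes "clinear f"
  shows "Max_map f (scaleC.span {x}) = scaleC.span {f x}"
proof -
  interpret f: Vector_Spaces.linear "(*\<^sub>C)" "(*\<^sub>C)" f by fact
  show ?thesis
    unfolding Max_map_def f.span_image[of "{x}", symmetric, simplified]
    using closed_span_singleton by (rule closure_closed)
qed

lemma span_singleton_eq_if_Max_map_eq:
  assumes "clinear f" and "clinear g"
    and "\<forall>M\<in>Max_carrier. Max_map f M = Max_map g M"
  shows "scaleC.span {f x} = scaleC.span {g x}"
  using assms span_singleton_in_Max_carrier by (metis Max_map_span_singleton)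

lemma clinear_unital_eq_if_collinear:
  fixes f g :: "'a::unital_cstar_algebra \<Rightarrow> 'b::unital_cstar_algebra"
  assumes "clinear f" and "clinear g" and "f 1 = 1" and "g 1 = 1"
    and collinear: "\<And>x. g x \<in> scaleC.span {f x}"
  shows "f = g"
proof
  interpret f: Vector_Spaces.linear "(*\<^sub>C)" "(*\<^sub>C)" f by fact
  interpret g: Vector_Spaces.linear "(*\<^sub>C)" "(*\<^sub>C)" g by fact
  fix a
  show "f a = g a"
  proof (cases "f a \<in> scaleC.span {1}")
    case True
    then obtain l where l: "f a = l *\<^sub>C 1" by (auto simp: scaleC.span_singleton)
    then have "f (a - l *\<^sub>C 1) = 0" by (simp add: f.diff f.scale \<open>f 1 = 1\<close>)
    then have "g (a - l *\<^sub>C 1) = 0" using collinear[of "a - l *\<^sub>C 1"] by simp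
    then show ?thesis by (simp add: l g.diff g.scale \<open>g 1 = 1\<close>)
  next
    case False
    obtain c c' where c: "g a = c *\<^sub>C f a" and c': "g (a + 1) = c' *\<^sub>C f (a + 1)"
      using collinear[of a] collinear[of "a + 1"] by (auto simp: scaleC.span_singleton)
    have "c *\<^sub>C f a + 1 = c' *\<^sub>C f a + c' *\<^sub>C 1"
      using c' by (simp add: c g.add f.add \<open>f 1 = 1\<close> \<open>g 1 = 1\<close> scaleC_add_right)
    then have dep: "(c - c') *\<^sub>C f a = (c' - 1) *\<^sub>C 1"
      by (simp add: algebra_simps)
    have "c = c'"
    proof (rule ccontr)
      assume "c \<noteq> c'"
      then have "f a = ((c' - 1) / (c - c')) *\<^sub>C 1"
        using arg_cong[OF dep, of "scaleC (1 / (c - c'))"] by simp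
      with False show False by (auto simp: scaleC.span_singleton)
    qed
    moreover have "(1::'b) \<noteq> 0"
    proof
      assume "(1::'b) = 0"
      then have "f a = 0" by (metis mult_1_right mult_zero_right)
      with False show False by (simp add: scaleC.span_zero)
    qed
    ultimately have "c = 1"
      using dep by simp
    then show ?thesis by (simp add: c)
  qed
qed

theorem theorem5p3:
  fixes f g :: "'a::unital_cstar_algebra \<Rightarrow> 'b::unital_cstar_algebra"
  assumes "unital_star_hom f" and "unital_star_hom g"
    and "\<forall>M\<in>Max_carrier. Max_map f M = Max_map g M"
  shows "f = g"
proof (rule clinear_unital_eq_if_collinear)
  show "clinear f" "clinear g"
    using assms(1,2) by (simp_all add: unital_star_hom_clinear)
  show "f 1 = 1" "g 1 = 1"
    using assms(1,2) by (simp_all add: unital_star_hom_def)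
  show "g x \<in> scaleC.span {f x}" for x
    using span_singleton_eq_if_Max_map_eq[OF \<open>clinear f\<close> \<open>clinear g\<close> assms(3)]
    by (simp add: scaleC.span_base)
qed

end
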